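(* Every strong partial metric space is $T_1$: if $s$ is a strong partial metric on a set $X$ and $\mathcal{T}$ is the topology on $X$ generated by the basis of $s$-open balls $B^s_\epsilon(x)=\{y\in X\mid s(x,y)-s(x,x)<\epsilon\}$ ($x\in X$, $\epsilon>0$), then for any two distinct $x,y\in X$ there exist open sets $U,V\in\mathcal{T}$ with $x\in U$, $y\notin U$, $y\in V$, $x\notin V$.
   Context: A strong partial metric on $X$ is a function $s:X\times X\to\mathbb{R}$ such that for all $x,y,z\in X$: $s(x,x)<s(x,y)$ whenever $x\ne y$; $s(x,y)=s(y,x)$; and $s(x,y)\le s(x,z)+s(z,y)-s(z,z)$. The $s$-open balls form a basis of a topology on $X$. *)

theory Defs
  imports "HOL-Analysis.Analysis"
begin

definition strong_partial_metric :: "'a set \<Rightarrow> ('a \<Rightarrow> 'a \<Rightarrow> real) \<Rightarrow> bool" where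
  "strong_partial_metric X s \<longleftrightarrow>
     (\<forall>x\<in>X. \<forall>y\<in>X. x \<noteq> y \<longrightarrow> s x x < s x y) \<and>
     (\<forall>x\<in>X. \<forall>y\<in>X. s x y = s y x) \<and>
     (\<forall>x\<in>X. \<forall>y\<in>X. \<forall>z\<in>X. s x y \<le> s x z + s z y - s z z)"

definition sball :: "'a set \<Rightarrow> ('a \<Rightarrow> 'a \<Rightarrow> real) \<Rightarrow> 'a \<Rightarrow> real \<Rightarrow> 'a set" where
  "sball X s x e = {y \<in> X. s x y - s x x < e}"

definition spm_topology :: "'a set \<Rightarrow> ('a \<Rightarrow> 'a \<Rightarrow> real) \<Rightarrow> 'a topology" where
  "spm_topology X s = topology_generated_by {sball X s x e | x e. x \<in> X \<and> e > 0}"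

end

theory Submission
  imports Defs
begin

text \<open>Since \<open>s x x < s x y\<close> for \<open>x \<noteq> y\<close>, the ball around \<open>x\<close> of radius
  \<open>s x y - s x x\<close> contains \<open>x\<close> but just misses \<open>y\<close>; by symmetry of the argument the
  ball around \<open>y\<close> of radius \<open>s y x - s y y\<close> separates the other way.\<close>

lemma openin_sball:
  assumes "x \<in> X" and "e > 0"
  shows "openin (spm_topology X s) (sball X s x e)"
  unfolding spm_topology_def
  by (rule topology_generated_by_Basis) (use assms in blast)

lemma centre_in_sball:
  assumes "x \<in> X" and "e > 0"
  shows "x \<in> sball X s x e"
  using assms by (simp add: sball_def)

lemma not_in_sball_radius_self: "y \<notin> sball X s x (s x y - s x x)"
  by (simp add: sball_def)

lemma strong_partial_metric_self_less:
  assumes "strong_partial_metric X s" and "x \<in> X" and "y \<in> X" and "x \<noteq> y"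
  shows "s x x < s x y"
  using assms unfolding strong_partial_metric_def by blast

lemma separating_sball:
  assumes "strong_partial_metric X s" and "x \<in> X" and "y \<in> X" and "x \<noteq> y"
  shows "openin (spm_topology X s) (sball X s x (s x y - s x x))"
    and "x \<in> sball X s x (s x y - s x x)"
    and "y \<notin> sball X s x (s x y - s x x)"
proof -
  have "s x y - s x x > 0"
    using strong_partial_metric_self_less[OF assms] by simp
  then show "openin (spm_topology X s) (sball X s x (s x y - s x x))"
    and "x \<in> sball X s x (s x y - s x x)"
    using assms(2) by (simp_all add: openin_sball centre_in_sball)
  show "y \<notin> sball X s x (s x y - s x x)"
    by (rule not_in_sball_radius_self)
qed

theorem lemma3p12:
  fixes X :: "'a set" and s :: "'a \<Rightarrow> 'a \<Rightarrow> real"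
  assumes "strong_partial_metric X s"
    and "x \<in> X" and "y \<in> X" and "x \<noteq> y"
  shows "\<exists>U V. openin (spm_topology X s) U \<and> openin (spm_topology X s) V \<and>
           x \<in> U \<and> y \<notin> U \<and> y \<in> V \<and> x \<notin> V"
proof (intro exI conjI)
  show "openin (spm_topology X s) (sball X s x (s x y - s x x))"
    and "x \<in> sball X s x (s x y - s x x)" and "y \<notin> sball X s x (s x y - s x x)"
    using separating_sball[OF assms] by blast+
  show "openin (spm_topology X s) (sball X s y (s y x - s y y))"
    and "y \<in> sball X s y (s y x - s y y)" and "x \<notin> sball X s y (s y x - s y y)"
    using separating_sball[OF assms(1,3,2) assms(4)[symmetric]] by blast+
qed

end
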